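(* Let $(G,f)\in\mathcal C$ with $|V(G)|=\aleph_1$. If $P$ is a hereditary property such that $P(G,f)$ holds and $(G,f)$ is not $P$-destructed, then $G$ possesses a perfect $f$-factor.
   Context: A graph is $G=(V,E)$ with $V$ a nonempty set and $E\subseteq\{e\subseteq V:|e|=2\}$. For $F\subseteq E$ and $x\in V$, $d_F(x)$ is the cardinal $|\{e\in F:x\in e\}|$. For $f:V\to$ Cardinals, an $f$-factor of $G$ is $F\subseteq E$ with $d_F(x)\le f(x)$ for all $x$; it is perfect if $d_F(x)=f(x)$ for all $x$; $f^{-1}(\lambda)=\{x\in V:f(x)=\lambda\}$. $\mathcal C$ is the class of all pairs $(G,f)$ with $G=(V,E)$ a graph, $f:V\to$ Cardinals, and $f(x)\le d_E(x)$ for all $x\in V$. A property $P$ is a class of pairs; $P(G,f)$ (also "$(G,f)$ fulfills $P$") means that $(G,f)\in\mathcal C$ and $(G,f)$ has property $P$. For $x,y\in V$, $G-\{x,y\}$ denotes $(V,E\setminus\{\{x,y\}\})$, and $f_{x,y}(v)=f(v)-1$ if $v\in\{x,y\}$ and $1\le f(v)<\aleph_0$, $f_{x,y}(v)=f(v)$ otherwise. $P$ is hereditary if for every $(G,f)$ with $P(G,f)$ and every $x\in V(G)$ with $f(x)>0$ there is $y\in V(G)$ with $f(y)>0$, $\{x,y\}\in E(G)$ and $P(G-\{x,y\},f_{x,y})$. Destructions: let $(G,f)\in\mathcal C$, $G=(V,E)$, $|V|=\kappa^+$ for an infinite cardinal $\kappa$. Let $(A_\alpha)_{\alpha<\kappa^+}$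 be an increasing continuous sequence (i.e. $A_\lambda=\bigcup_{\alpha<\lambda}A_\alpha$ for limit $\lambda$) of subsets of $V$ with $|A_\alpha|<\kappa^+$ for all $\alpha$ and $V=\bigcup_{\alpha<\kappa^+}A_\alpha$. For $\alpha<\kappa^+$ put $V_\alpha=(V\setminus A_\alpha)\cup f^{-1}(\kappa^+)$, $E_\alpha=\{\{x,y\}\in E: x\in V_\alpha,\ y\in V\setminus A_\alpha\}$, $G_\alpha=(V_\alpha,E_\alpha)$, $f_\alpha=f\restriction V_\alpha$. For a property $P$, $(A_\alpha)_{\alpha<\kappa^+}$ is a $P$-destruction of $(G,f)$ if $S=\{\alpha<\kappa^+: P(G_\alpha,f_\alpha)\text{ fails}\}$ is stationary in $\kappa^+$; $(G,f)$ is $P$-destructed if some such sequence is a $P$-destruction of $(G,f)$. *)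

theory Defs
  imports Main "HOL-Library.Countable_Set"
begin

text \<open>Every cardinal relevant to a pair (G,f) in C with |V(G)| = aleph_1 is at most
  aleph_1 (f(x) <= d_E(x) <= |E| <= aleph_1).  We represent such cardinals by a datatype.\<close>

datatype cval = CFin nat | CAleph0 | CAleph1

text \<open>The well order aleph_1 (on its field), from the library's successor cardinal.\<close>
abbreviation omega1 :: "nat set rel" where
  "omega1 \<equiv> cardSuc natLeq"

definition cv_eq :: "cval \<Rightarrow> 'b set \<Rightarrow> bool" where
  "cv_eq c A = (case c of
      CFin n \<Rightarrow> finite A \<and> card A = n
    | CAleph0 \<Rightarrow> infinite A \<and> countable A
    | CAleph1 \<Rightarrow> (card_of A, omega1) \<in> ordIso)"

definition cv_le :: "cval \<Rightarrow> 'b set \<Rightarrow> bool" where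
  "cv_le c A = (case c of
      CFin n \<Rightarrow> infinite A \<or> n \<le> card A
    | CAleph0 \<Rightarrow> infinite A
    | CAleph1 \<Rightarrow> uncountable A)"

definition cv_ge :: "cval \<Rightarrow> 'b set \<Rightarrow> bool" where
  "cv_ge c A = (case c of
      CFin n \<Rightarrow> finite A \<and> card A \<le> n
    | CAleph0 \<Rightarrow> countable A
    | CAleph1 \<Rightarrow> (card_of A, omega1) \<in> ordLeq)"

definition graph :: "'a set \<Rightarrow> 'a set set \<Rightarrow> bool" where
  "graph V E \<longleftrightarrow> V \<noteq> {} \<and> (\<forall>e\<in>E. e \<subseteq> V \<and> card e = 2)"

definition inc :: "'a set set \<Rightarrow> 'a \<Rightarrow> 'a set set" where
  "inc F x = {e \<in> F. x \<in> e}"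

definition f_factor :: "'a set \<Rightarrow> 'a set set \<Rightarrow> ('a \<Rightarrow> cval) \<Rightarrow> 'a set set \<Rightarrow> bool" where
  "f_factor V E f F \<longleftrightarrow> F \<subseteq> E \<and> (\<forall>x\<in>V. cv_ge (f x) (inc F x))"

definition perfect_f_factor :: "'a set \<Rightarrow> 'a set set \<Rightarrow> ('a \<Rightarrow> cval) \<Rightarrow> 'a set set \<Rightarrow> bool" where
  "perfect_f_factor V E f F \<longleftrightarrow> f_factor V E f F \<and> (\<forall>x\<in>V. cv_eq (f x) (inc F x))"

text \<open>The class C.  A function V -> Cardinals is represented by a total function that is
  extensional (value 0 outside V).\<close>
definition inC :: "'a set \<Rightarrow> 'a set set \<Rightarrow> ('a \<Rightarrow> cval) \<Rightarrow> bool" where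
  "inC V E f \<longleftrightarrow> graph V E \<and> (\<forall>x. x \<notin> V \<longrightarrow> f x = CFin 0)
     \<and> (\<forall>x\<in>V. cv_le (f x) (inc E x))"

text \<open>P(G,f): (G,f) in C and (G,f) has property P\<close>
definition holds :: "('a set \<Rightarrow> 'a set set \<Rightarrow> ('a \<Rightarrow> cval) \<Rightarrow> bool)
    \<Rightarrow> 'a set \<Rightarrow> 'a set set \<Rightarrow> ('a \<Rightarrow> cval) \<Rightarrow> bool" where
  "holds P V E f \<longleftrightarrow> inC V E f \<and> P V E f"

definition cdec :: "cval \<Rightarrow> cval" where
  "cdec c = (case c of CFin (Suc n) \<Rightarrow> CFin n | _ \<Rightarrow> c)"

definition fxy :: "('a \<Rightarrow> cval) \<Rightarrow> 'a \<Rightarrow> 'a \<Rightarrow> 'a \<Rightarrow> cval" where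
  "fxy f x y = (\<lambda>v. if v \<in> {x, y} then cdec (f v) else f v)"

definition hereditary :: "('a set \<Rightarrow> 'a set set \<Rightarrow> ('a \<Rightarrow> cval) \<Rightarrow> bool) \<Rightarrow> bool" where
  "hereditary P \<longleftrightarrow> (\<forall>V E f x. holds P V E f \<and> x \<in> V \<and> f x \<noteq> CFin 0 \<longrightarrow>
      (\<exists>y\<in>V. f y \<noteq> CFin 0 \<and> {x, y} \<in> E \<and> holds P V (E - {{x, y}}) (fxy f x y)))"

definition olt :: "nat set \<Rightarrow> nat set \<Rightarrow> bool" where
  "olt a b \<longleftrightarrow> (a, b) \<in> omega1 \<and> a \<noteq> b"

definition is_limit :: "nat set \<Rightarrow> bool" where
  "is_limit l \<longleftrightarrow> l \<in> Field omega1 \<and> (\<exists>a. olt a l) \<and> (\<forall>a. olt a l \<longrightarrow> (\<exists>b. olt a b \<and> olt b l))"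

definition club :: "nat set set \<Rightarrow> bool" where
  "club C \<longleftrightarrow> C \<subseteq> Field omega1
     \<and> (\<forall>a\<in>Field omega1. \<exists>b\<in>C. olt a b)
     \<and> (\<forall>l. is_limit l \<and> (\<forall>a. olt a l \<longrightarrow> (\<exists>b\<in>C. olt a b \<and> olt b l)) \<longrightarrow> l \<in> C)"

definition stationary :: "nat set set \<Rightarrow> bool" where
  "stationary S \<longleftrightarrow> S \<subseteq> Field omega1 \<and> (\<forall>C. club C \<longrightarrow> S \<inter> C \<noteq> {})"

section \<open>Destructions (kappa = aleph_0, kappa^+ = aleph_1)\<close>

definition filtration :: "'a set \<Rightarrow> (nat set \<Rightarrow> 'a set) \<Rightarrow> bool" where
  "filtration V A \<longleftrightarrow>
     (\<forall>a b. (a, b) \<in> omega1 \<longrightarrow> A a \<subseteq> A b)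
   \<and> (\<forall>l. is_limit l \<longrightarrow> A l = (\<Union>b\<in>{b. olt b l}. A b))
   \<and> (\<forall>a\<in>Field omega1. countable (A a))
   \<and> V = (\<Union>a\<in>Field omega1. A a)"

definition V_al :: "'a set \<Rightarrow> ('a \<Rightarrow> cval) \<Rightarrow> (nat set \<Rightarrow> 'a set) \<Rightarrow> nat set \<Rightarrow> 'a set" where
  "V_al V f A a = (V - A a) \<union> {x\<in>V. f x = CAleph1}"

definition E_al :: "'a set \<Rightarrow> 'a set set \<Rightarrow> ('a \<Rightarrow> cval) \<Rightarrow> (nat set \<Rightarrow> 'a set) \<Rightarrow> nat set \<Rightarrow> 'a set set" where
  "E_al V E f A a = {e\<in>E. \<exists>x y. e = {x, y} \<and> x \<in> V_al V f A a \<and> y \<in> V - A a}"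

definition f_al :: "'a set \<Rightarrow> ('a \<Rightarrow> cval) \<Rightarrow> (nat set \<Rightarrow> 'a set) \<Rightarrow> nat set \<Rightarrow> 'a \<Rightarrow> cval" where
  "f_al V f A a = (\<lambda>x. if x \<in> V_al V f A a then f x else CFin 0)"

definition destruction :: "('a set \<Rightarrow> 'a set set \<Rightarrow> ('a \<Rightarrow> cval) \<Rightarrow> bool)
    \<Rightarrow> 'a set \<Rightarrow> 'a set set \<Rightarrow> ('a \<Rightarrow> cval) \<Rightarrow> (nat set \<Rightarrow> 'a set) \<Rightarrow> bool" where
  "destruction P V E f A \<longleftrightarrow> filtration V A \<and>
     stationary {a \<in> Field omega1. \<not> holds P (V_al V f A a) (E_al V E f A a) (f_al V f A a)}"

definition destructed :: "('a set \<Rightarrow> 'a set set \<Rightarrow> ('a \<Rightarrow> cval) \<Rightarrow> bool)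
    \<Rightarrow> 'a set \<Rightarrow> 'a set set \<Rightarrow> ('a \<Rightarrow> cval) \<Rightarrow> bool" where
  "destructed P V E f \<longleftrightarrow> (\<exists>A. destruction P V E f A)"

end

(* By heredity, every vertex x of positive residual demand in the graph G_B that remains after
   removing a set B has a partner y such that deleting the edge {x,y} and lowering both demands
   keeps P.  Choose a continuous filtration (A_a) of V by countable sets in which A_b is closed
   under the partner choices for every A_c, c < b.  As (G,f) is not P-destructed, P(G_a, f_a)
   holds for all a in some club C.  For a in C together with the least ordinal, and a' the next
   element of C, a greedy enumeration of A_a' joins vertices to their partners and yields a
   countable factor of G_a that meets exactly the demand of every vertex of A_a' - A_a whose
   demand is countable and gives an edge to every vertex of demand aleph_1 in A_a'.  Edges of
   different pieces live in disjoint intervals, so in the union a vertex of countable demand only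
   sees the piece of the unique interval containing it, while a vertex of demand aleph_1 receives
   an edge from each of the uncountably many later pieces. *)

theory Submission
  imports Defs "HOL-Library.Countable_Set_Type"
begin

unbundle cardinal_syntax

section \<open>The well-order \<open>\<omega>\<^sub>1\<close>\<close>

lemma Card_order_omega1: "Card_order omega1"
  by (simp add: cardSuc_Card_order natLeq_Card_order)

lemma Well_order_omega1: "Well_order omega1"
  using Card_order_omega1 card_order_on_def by blast

lemma wo_rel_omega1: "wo_rel omega1"
  using Well_order_omega1 wo_rel_def by blast

lemma countable_iff_ordLess_omega1: "countable A \<longleftrightarrow> |A| <o omega1"
  using cardSuc_ordLeq_ordLess[OF natLeq_Card_order card_of_Card_order, of A]
  by (simp add: countable_card_le_natLeq)

lemma uncountable_iff_omega1_ordLeq: "uncountable A \<longleftrightarrow> omega1 \<le>o |A|"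
  using countable_iff_ordLess_omega1[of A] not_ordLess_iff_ordLeq[OF Well_order_omega1 card_of_Well_order, of A]
  by simp

lemma uncountable_if_ordIso_omega1: "|A| =o omega1 \<Longrightarrow> uncountable A"
  using countable_iff_ordLess_omega1 not_ordLess_ordIso by blast

lemma uncountable_Field_omega1: "uncountable (Field omega1)"
  using uncountable_if_ordIso_omega1 card_of_Field_ordIso[OF Card_order_omega1] by blast

lemma olt_iff_underS: "olt a b \<longleftrightarrow> a \<in> underS omega1 b"
  unfolding olt_def underS_def by auto

lemma olt_Field: "olt a b \<Longrightarrow> a \<in> Field omega1 \<and> b \<in> Field omega1"
  unfolding olt_def Field_def by auto

lemma olt_imp_le: "olt a b \<Longrightarrow> (a, b) \<in> omega1"
  unfolding olt_def by simp

lemma countable_olt_below: "countable {a. olt a b}"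
proof (cases "b \<in> Field omega1")
  case True
  then show ?thesis
    using card_of_underS[OF Card_order_omega1 True]
    by (simp add: olt_iff_underS countable_iff_ordLess_omega1)
next
  case False
  then have "{a. olt a b} = {}" using olt_Field by blast
  then show ?thesis by simp
qed

lemma countable_omega1_below: "countable {a. (a, b) \<in> omega1}"
proof -
  have "{a. (a, b) \<in> omega1} \<subseteq> insert b {a. olt a b}" unfolding olt_def by blast
  then show ?thesis using countable_olt_below countable_subset by (metis countable_insert)
qed

lemma olt_irrefl: "\<not> olt a a"
  unfolding olt_def by simp

lemma olt_trans: "olt a b \<Longrightarrow> olt b c \<Longrightarrow> olt a c"
  using wo_rel.TRANS[OF wo_rel_omega1] wo_rel.ANTISYM[OF wo_rel_omega1]
  unfolding olt_def by (metis antisymD transD)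

lemma olt_asym: "olt a b \<Longrightarrow> \<not> olt b a"
  using olt_trans olt_irrefl by blast

lemma olt_linear: "a \<in> Field omega1 \<Longrightarrow> b \<in> Field omega1 \<Longrightarrow> olt a b \<or> a = b \<or> olt b a"
  using wo_rel_omega1 wo_rel.TOTALS unfolding olt_def by fastforce

lemma omega1_iff_olt: "(a, b) \<in> omega1 \<longleftrightarrow> olt a b \<or> (a = b \<and> a \<in> Field omega1)"
proof -
  have "a \<in> Field omega1 \<Longrightarrow> (a, a) \<in> omega1"
    using wo_rel.REFL[OF wo_rel_omega1] by (simp add: refl_on_def)
  moreover have "(a, b) \<in> omega1 \<Longrightarrow> a \<in> Field omega1" by (rule FieldI1)
  ultimately show ?thesis unfolding olt_def by auto
qed

lemma not_olt_iff:
  assumes "a \<in> Field omega1" "b \<in> Field omega1"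
  shows "\<not> olt a b \<longleftrightarrow> (b, a) \<in> omega1"
proof
  assume "\<not> olt a b"
  then show "(b, a) \<in> omega1" using olt_linear[OF assms] assms(2) omega1_iff_olt by blast
next
  assume "(b, a) \<in> omega1"
  then show "\<not> olt a b" using omega1_iff_olt olt_asym olt_irrefl by blast
qed

lemma le_olt_trans: "(a, b) \<in> omega1 \<Longrightarrow> olt b c \<Longrightarrow> olt a c"
  using omega1_iff_olt olt_trans by blast

lemma olt_le_trans: "olt a b \<Longrightarrow> (b, c) \<in> omega1 \<Longrightarrow> olt a c"
  using omega1_iff_olt olt_trans by blast

lemma wf_olt: "wf {(a, b). olt a b}"
proof -
  have "{(a, b). olt a b} = omega1 - Id" unfolding olt_def by auto
  then show ?thesis using wo_rel.WF[OF wo_rel_omega1] by simp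
qed

lemma olt_minimal:
  assumes "a \<in> S"
  obtains m where "m \<in> S" "\<And>b. olt b m \<Longrightarrow> b \<notin> S"
  using wfE_min[OF wf_olt assms] by auto

lemma olt_unbounded: "a \<in> Field omega1 \<Longrightarrow> \<exists>b. olt a b"
proof (rule ccontr)
  assume "a \<in> Field omega1" and "\<nexists>b. olt a b"
  then have "Field omega1 \<subseteq> insert a {b. olt b a}" using olt_linear by auto
  then show False
    using countable_subset countable_olt_below uncountable_Field_omega1 by (metis countable_insert)
qed

definition omega1_zero :: "nat set" where
  "omega1_zero = (SOME z. z \<in> Field omega1 \<and> (\<forall>a. \<not> olt a z))"

lemma omega1_zero: "omega1_zero \<in> Field omega1" "\<not> olt a omega1_zero"
proof -
  obtain x where "x \<in> Field omega1" using uncountable_Field_omega1 by fastforce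
  then obtain z where "z \<in> Field omega1" "\<And>b. olt b z \<Longrightarrow> b \<notin> Field omega1"
    by (rule olt_minimal) blast
  then have "\<exists>z. z \<in> Field omega1 \<and> (\<forall>a. \<not> olt a z)" using olt_Field by blast
  then have "omega1_zero \<in> Field omega1 \<and> (\<forall>a. \<not> olt a omega1_zero)"
    unfolding omega1_zero_def by (rule someI_ex)
  then show "omega1_zero \<in> Field omega1" "\<not> olt a omega1_zero" by blast+
qed

lemma uncountable_club_above:
  assumes "club C" and "b \<in> Field omega1"
  shows "uncountable {c \<in> C. olt b c}"
proof
  let ?U = "(\<Union>c\<in>{c \<in> C. olt b c}. {a. olt a c}) \<union> insert b {a. olt a b}"
  assume "countable {c \<in> C. olt b c}"
  then have "countable ?U" using countable_olt_below by auto
  moreover have "Field omega1 \<subseteq> ?U"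
  proof
    fix a assume a: "a \<in> Field omega1"
    show "a \<in> ?U"
    proof (cases "olt b a")
      case True
      then obtain c where "c \<in> C" "olt a c" using assms a unfolding club_def by blast
      then show ?thesis using True olt_trans by blast
    next
      case False
      then have "a = b \<or> olt a b" using olt_linear[OF a assms(2)] by blast
      then show ?thesis by blast
    qed
  qed
  ultimately show False using uncountable_Field_omega1 countable_subset by blast
qed

lemma filtration_mono: "filtration V A \<Longrightarrow> (a, b) \<in> omega1 \<Longrightarrow> A a \<subseteq> A b"
  unfolding filtration_def by blast

lemma filtration_mono_olt: "filtration V A \<Longrightarrow> olt a b \<Longrightarrow> A a \<subseteq> A b"
  using filtration_mono olt_imp_le by blast

text \<open>The stage \<open>s\<close> is the least upper bound of the stages of \<open>insert c0 C\<close> missing \<open>x\<close>;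
  closedness of \<open>C\<close> and continuity of \<open>A\<close> show that \<open>s\<close> itself misses \<open>x\<close>.\<close>

lemma last_club_stage_excluding:
  assumes A: "filtration V A" and C: "club C"
    and c0: "c0 \<in> Field omega1" "x \<notin> A c0" and b: "b \<in> Field omega1" "x \<in> A b"
  obtains s where "s \<in> insert c0 C" "x \<notin> A s" "\<And>c. c \<in> C \<Longrightarrow> olt s c \<Longrightarrow> x \<in> A c"
proof -
  define D where "D = {c \<in> insert c0 C. x \<notin> A c}"
  define U where "U = {u \<in> Field omega1. \<forall>c\<in>D. (c, u) \<in> omega1}"
  have D_Field: "D \<subseteq> Field omega1" using C c0 unfolding D_def club_def by blast
  have "b \<in> U"
  proof -
    have "(c, b) \<in> omega1" if "c \<in> D" for c
    proof -
      have "\<not> olt b c" using that b(2) filtration_mono_olt[OF A, of b c] unfolding D_def by blast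
      then show ?thesis using not_olt_iff[OF b(1)] D_Field that by blast
    qed
    then show ?thesis using b unfolding U_def by blast
  qed
  then obtain s where s: "s \<in> U" "\<And>a. olt a s \<Longrightarrow> a \<notin> U" by (rule olt_minimal) blast
  have s_Field: "s \<in> Field omega1" using s(1) unfolding U_def by blast
  have "s \<in> D"
  proof (rule ccontr)
    assume "s \<notin> D"
    have below: "\<exists>c\<in>D. olt a c \<and> olt c s" if "olt a s" for a
    proof -
      have "a \<in> Field omega1" "a \<notin> U" using that s(2) olt_Field by blast+
      then obtain c where c: "c \<in> D" "(c, a) \<notin> omega1" unfolding U_def by blast
      then have "olt a c" using not_olt_iff[OF \<open>a \<in> Field omega1\<close>] D_Field by blast
      moreover have "olt c s"
        using c(1) s(1) \<open>s \<notin> D\<close> unfolding U_def olt_def by blast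
      ultimately show ?thesis using c(1) by blast
    qed
    have "c0 \<in> D" using c0 unfolding D_def by blast
    then have "olt c0 s" using s(1) \<open>s \<notin> D\<close> unfolding U_def olt_def by blast
    then have limit: "is_limit s"
      unfolding is_limit_def using s_Field below by blast
    have "\<exists>c\<in>C. olt a c \<and> olt c s" if "olt a s" for a
    proof -
      obtain a' where "olt a' s" "olt c0 a' \<or> a' = c0" "(a, a') \<in> omega1"
      proof (cases "olt c0 a")
        case True
        then show ?thesis using that(1) \<open>olt a s\<close> omega1_iff_olt olt_Field by blast
      next
        case False
        then have "(a, c0) \<in> omega1" using not_olt_iff[OF c0(1)] \<open>olt a s\<close> olt_Field by blast
        then show ?thesis using that(1) \<open>olt c0 s\<close> by blast
      qed
      then obtain c where "c \<in> D" "olt a' c" "olt c s" using below by blast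
      moreover have "c \<noteq> c0" using \<open>olt a' c\<close> \<open>olt c0 a' \<or> a' = c0\<close> olt_asym olt_irrefl by blast
      ultimately show ?thesis using \<open>(a, a') \<in> omega1\<close> le_olt_trans unfolding D_def by blast
    qed
    then have "s \<in> C" using C limit unfolding club_def by blast
    then have "x \<in> A s" using \<open>s \<notin> D\<close> unfolding D_def by blast
    then obtain a where "olt a s" "x \<in> A a" using A limit unfolding filtration_def by blast
    then obtain c where "c \<in> D" "olt a c" using below by blast
    then show False using \<open>x \<in> A a\<close> filtration_mono_olt[OF A] unfolding D_def by blast
  qed
  moreover have "x \<in> A c" if "c \<in> C" "olt s c" for c
    using that s(1) olt_asym unfolding U_def D_def olt_def by blast
  ultimately show ?thesis using that unfolding D_def by blast
qed

section \<open>Residual demands and hereditary partners\<close>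

lemma inc_empty [simp]: "inc {} v = {}"
  unfolding inc_def by simp

lemma inc_insert: "inc (insert e R) v = (if v \<in> e then insert e (inc R v) else inc R v)"
  unfolding inc_def by auto

lemma inc_mono: "R \<subseteq> S \<Longrightarrow> inc R v \<subseteq> inc S v"
  unfolding inc_def by auto

lemma finite_inc: "finite R \<Longrightarrow> finite (inc R v)"
  unfolding inc_def by simp

lemma card_inc_insert_new:
  assumes "finite R" "e \<notin> R" "v \<in> e"
  shows "card (inc (insert e R) v) = Suc (card (inc R v))"
proof -
  have "e \<notin> inc R v" using assms(2) unfolding inc_def by blast
  then show ?thesis using assms(3) finite_inc[OF assms(1)] by (simp add: inc_insert)
qed

text \<open>The truncated subtraction never truncates where it matters: the greedy construction below
  keeps \<open>card (inc R v) \<le> k\<close> whenever \<open>h v = CFin k\<close>.\<close>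

definition residual :: "('a \<Rightarrow> cval) \<Rightarrow> 'a set set \<Rightarrow> 'a \<Rightarrow> cval" where
  "residual h R v = (case h v of CFin k \<Rightarrow> CFin (k - card (inc R v)) | c \<Rightarrow> c)"

lemma residual_empty [simp]: "residual h {} = h"
proof
  fix v show "residual h {} v = h v"
    unfolding residual_def by (cases "h v") simp_all
qed

lemma card_inc_less_if_residual_nonzero:
  "h v = CFin k \<Longrightarrow> residual h R v \<noteq> CFin 0 \<Longrightarrow> card (inc R v) < k"
  unfolding residual_def by simp

lemma fxy_residual:
  assumes "finite R" "{x, y} \<notin> R"
  shows "fxy (residual h R) x y = residual h (insert {x, y} R)"
proof
  fix v
  show "fxy (residual h R) x y v = residual h (insert {x, y} R) v"
  proof (cases "v \<in> {x, y}")
    case True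
    then have "card (inc (insert {x, y} R) v) = Suc (card (inc R v))"
      using card_inc_insert_new[OF assms] by blast
    then show ?thesis using True unfolding fxy_def residual_def cdec_def
      by (cases "h v"; cases "h v = CFin (card (inc R v))") (auto split: nat.split)
  next
    case False
    then have unchanged: "inc (insert {x, y} R) v = inc R v" by (simp add: inc_insert)
    show ?thesis using False unfolding fxy_def residual_def unchanged by simp
  qed
qed

definition admissible_partner :: "('a set \<Rightarrow> 'a set set \<Rightarrow> ('a \<Rightarrow> cval) \<Rightarrow> bool)
    \<Rightarrow> 'a set \<Rightarrow> 'a set set \<Rightarrow> ('a \<Rightarrow> cval) \<Rightarrow> 'a set set \<Rightarrow> 'a \<Rightarrow> 'a \<Rightarrow> bool" where
  "admissible_partner P W D h R x y \<longleftrightarrow> y \<in> W \<and> residual h R y \<noteq> CFin 0 \<and> {x, y} \<in> D - R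
     \<and> holds P W (D - insert {x, y} R) (residual h (insert {x, y} R))"

text \<open>When heredity provides no partner, \<open>partner\<close> returns the junk value \<open>x\<close>.\<close>

definition partner :: "('a set \<Rightarrow> 'a set set \<Rightarrow> ('a \<Rightarrow> cval) \<Rightarrow> bool)
    \<Rightarrow> 'a set \<Rightarrow> 'a set set \<Rightarrow> ('a \<Rightarrow> cval) \<Rightarrow> 'a set set \<Rightarrow> 'a \<Rightarrow> 'a" where
  "partner P W D h R x =
     (if \<exists>y. admissible_partner P W D h R x y then SOME y. admissible_partner P W D h R x y else x)"

lemma partner_mem: "partner P W D h R x \<in> insert x W"
proof (cases "\<exists>y. admissible_partner P W D h R x y")
  case True
  then have "admissible_partner P W D h R x (partner P W D h R x)"
    unfolding partner_def by (simp add: someI_ex)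
  then show ?thesis unfolding admissible_partner_def by blast
qed (simp add: partner_def)

lemma admissible_partner:
  assumes "hereditary P" "finite R" "holds P W (D - R) (residual h R)"
    and "x \<in> W" "residual h R x \<noteq> CFin 0"
  shows "admissible_partner P W D h R x (partner P W D h R x)"
proof -
  obtain y where y: "y \<in> W" "residual h R y \<noteq> CFin 0" "{x, y} \<in> D - R"
    "holds P W (D - R - {{x, y}}) (fxy (residual h R) x y)"
    using assms unfolding hereditary_def by blast
  have "D - R - {{x, y}} = D - insert {x, y} R" by blast
  then have "admissible_partner P W D h R x y"
    using y fxy_residual[OF assms(2)] unfolding admissible_partner_def by auto
  then show ?thesis unfolding partner_def by (auto intro: someI)
qed

section \<open>A greedy countable factor\<close>

definition finite_edge_sets :: "'a set \<Rightarrow> 'a set set set" where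
  "finite_edge_sets T = {R. finite R \<and> (\<forall>e\<in>R. finite e \<and> e \<subseteq> T)}"

lemma countable_finite_edge_sets: "countable T \<Longrightarrow> countable (finite_edge_sets T)"
proof -
  assume "countable T"
  then have "countable {e. finite e \<and> e \<subseteq> T}" by (rule countable_Collect_finite_subset)
  then have "countable {R. finite R \<and> R \<subseteq> {e. finite e \<and> e \<subseteq> T}}"
    by (rule countable_Collect_finite_subset)
  moreover have "finite_edge_sets T = {R. finite R \<and> R \<subseteq> {e. finite e \<and> e \<subseteq> T}}"
    unfolding finite_edge_sets_def by blast
  ultimately show ?thesis by simp
qed

locale greedy_factor =
  fixes P :: "'a set \<Rightarrow> 'a set set \<Rightarrow> ('a \<Rightarrow> cval) \<Rightarrow> bool"
    and W :: "'a set" and D :: "'a set set" and h :: "'a \<Rightarrow> cval" and T :: "'a set"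
  assumes hereditary: "hereditary P"
    and holds: "holds P W D h"
    and countable_T: "countable T"
    and partner_closed: "\<And>R x. R \<in> finite_edge_sets T \<Longrightarrow> x \<in> T \<Longrightarrow> partner P W D h R x \<in> T"
begin

text \<open>The first component of the pair coded by \<open>n\<close> selects the vertex, so every vertex of
  \<open>T \<inter> W\<close> is visited infinitely often.\<close>

definition visit :: "nat \<Rightarrow> 'a" where
  "visit n = from_nat_into (T \<inter> W) (fst (prod_decode n))"

primrec greedy :: "nat \<Rightarrow> 'a set set" where
  "greedy 0 = {}"
| "greedy (Suc n) =
     (if visit n \<in> T \<inter> W \<and> residual h (greedy n) (visit n) \<noteq> CFin 0
      then insert {visit n, partner P W D h (greedy n) (visit n)} (greedy n) else greedy n)"

definition invariant :: "'a set set \<Rightarrow> bool" where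
  "invariant R \<longleftrightarrow> R \<in> finite_edge_sets T \<and> R \<subseteq> D \<and> holds P W (D - R) (residual h R)
     \<and> (\<forall>v k. h v = CFin k \<longrightarrow> card (inc R v) \<le> k)"

lemma invariant_insert_partner:
  assumes R: "invariant R" and x: "x \<in> T \<inter> W" and demand: "residual h R x \<noteq> CFin 0"
  shows "invariant (insert {x, partner P W D h R x} R)"
    and "{x, partner P W D h R x} \<notin> R"
proof -
  let ?y = "partner P W D h R x"
  have fin: "finite R" and RT: "R \<in> finite_edge_sets T"
    using R unfolding invariant_def finite_edge_sets_def by simp_all
  have "admissible_partner P W D h R x ?y"
    using admissible_partner[OF hereditary fin _ _ demand] R x unfolding invariant_def by blast
  then have y_demand: "residual h R ?y \<noteq> CFin 0" and new: "{x, ?y} \<in> D - R"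
    and holds': "holds P W (D - insert {x, ?y} R) (residual h (insert {x, ?y} R))"
    unfolding admissible_partner_def by simp_all
  then show "{x, ?y} \<notin> R" by blast
  have "?y \<in> T" using partner_closed RT x by blast
  then have "insert {x, ?y} R \<in> finite_edge_sets T"
    using RT x unfolding finite_edge_sets_def by auto
  moreover have "card (inc (insert {x, ?y} R) v) \<le> k" if "h v = CFin k" for v k
  proof (cases "v \<in> {x, ?y}")
    case True
    then have "card (inc R v) < k"
      using card_inc_less_if_residual_nonzero[of h v k R] that demand y_demand by blast
    then show ?thesis using card_inc_insert_new[OF fin] new True that by simp
  next
    case False
    then show ?thesis using R that unfolding invariant_def by (simp add: inc_insert)
  qed
  ultimately show "invariant (insert {x, ?y} R)"
    using R new holds' unfolding invariant_def by blast
qed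

lemma invariant_greedy: "invariant (greedy n)"
proof (induction n)
  case 0
  show ?case using holds unfolding invariant_def finite_edge_sets_def by simp
next
  case (Suc n)
  then show ?case using invariant_insert_partner(1) by simp
qed

lemma greedy_mono: "m \<le> n \<Longrightarrow> greedy m \<subseteq> greedy n"
  by (induction n rule: dec_induct) auto

lemma finite_greedy: "finite (greedy n)"
  using invariant_greedy unfolding invariant_def finite_edge_sets_def by blast

lemma visit_infinitely_often:
  assumes "z \<in> T \<inter> W"
  shows "\<exists>n\<ge>N. visit n = z"
proof -
  have "countable (T \<inter> W)" using countable_T by simp
  then have "visit (prod_encode (to_nat_on (T \<inter> W) z, N)) = z"
    unfolding visit_def using assms by simp
  then show ?thesis using le_prod_encode_2 by blast
qed

lemma greedy_degree_reaches:
  assumes z: "z \<in> T \<inter> W"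
    and demand: "\<And>n. card (inc (greedy n) z) < K \<Longrightarrow> residual h (greedy n) z \<noteq> CFin 0"
  shows "\<exists>n. K \<le> card (inc (greedy n) z)"
proof -
  have "\<exists>n. m \<le> card (inc (greedy n) z)" if "m \<le> K" for m
    using that
  proof (induction m)
    case (Suc m)
    then obtain n where n: "m \<le> card (inc (greedy n) z)" by auto
    obtain n' where n': "n \<le> n'" "visit n' = z" using visit_infinitely_often[OF z] by blast
    have "card (inc (greedy n) z) \<le> card (inc (greedy n') z)"
      using card_mono[OF finite_inc[OF finite_greedy] inc_mono[OF greedy_mono[OF n'(1)]]] .
    show ?case
    proof (cases "Suc m \<le> card (inc (greedy n') z)")
      case False
      then have "card (inc (greedy n') z) < K" using Suc.prems by simp
      then have "residual h (greedy n') z \<noteq> CFin 0" by (rule demand)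
      then have "card (inc (greedy (Suc n')) z) = Suc (card (inc (greedy n') z))"
        using invariant_insert_partner(2)[OF invariant_greedy] z n'(2)
        by (simp add: card_inc_insert_new finite_greedy)
      then show ?thesis using n \<open>card (inc (greedy n) z) \<le> _\<close> by (metis Suc_le_mono le_trans)
    qed blast
  qed simp
  then show ?thesis by blast
qed

definition factor :: "'a set set" where
  "factor = (\<Union>n. greedy n)"

lemma inc_factor: "inc factor v = (\<Union>n. inc (greedy n) v)"
  unfolding factor_def inc_def by auto

lemma factor_subset: "factor \<subseteq> D"
  using invariant_greedy unfolding factor_def invariant_def by blast

lemma factor_edges_subset: "e \<in> factor \<Longrightarrow> e \<subseteq> T"
  using invariant_greedy unfolding factor_def invariant_def finite_edge_sets_def by blast

lemma countable_factor: "countable factor"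
  unfolding factor_def using finite_greedy by (simp add: countable_finite)

lemma factor_degree_finite:
  assumes z: "z \<in> T \<inter> W" and hz: "h z = CFin k"
  shows "finite (inc factor z) \<and> card (inc factor z) = k"
proof -
  have bound: "card (inc (greedy n) z) \<le> k" for n
    using invariant_greedy hz unfolding invariant_def by blast
  obtain N where "k \<le> card (inc (greedy N) z)"
    using greedy_degree_reaches[OF z] hz unfolding residual_def by auto
  then have N: "card (inc (greedy N) z) = k" using bound le_antisym by blast
  have "inc (greedy n) z \<subseteq> inc (greedy N) z" for n
  proof (cases "n \<le> N")
    case True
    then show ?thesis by (intro inc_mono greedy_mono)
  next
    case False
    then have "inc (greedy N) z \<subseteq> inc (greedy n) z" by (intro inc_mono greedy_mono) simp
    then show ?thesis using card_seteq[OF finite_inc[OF finite_greedy]] bound N by metis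
  qed
  then have "inc factor z = inc (greedy N) z" unfolding inc_factor by blast
  then show ?thesis using N finite_inc[OF finite_greedy] by simp
qed

lemma greedy_degree_unbounded:
  assumes z: "z \<in> T \<inter> W" and hz: "h z \<in> {CAleph0, CAleph1}"
  shows "\<exists>n. K \<le> card (inc (greedy n) z)"
  using greedy_degree_reaches[OF z] hz unfolding residual_def by (cases "h z") auto

lemma factor_degree:
  assumes "z \<in> T \<inter> W"
  shows "if h z = CAleph1 then inc factor z \<noteq> {} else cv_eq (h z) (inc factor z)"
proof (cases "h z")
  case (CFin k)
  then show ?thesis using factor_degree_finite[OF assms] unfolding cv_eq_def by simp
next
  case CAleph0
  have "infinite (inc factor z)"
  proof
    assume fin: "finite (inc factor z)"
    obtain n where "Suc (card (inc factor z)) \<le> card (inc (greedy n) z)"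
      using greedy_degree_unbounded[OF assms] CAleph0 by blast
    moreover have "card (inc (greedy n) z) \<le> card (inc factor z)"
      using card_mono[OF fin] unfolding inc_factor by blast
    ultimately show False by simp
  qed
  moreover have "countable (inc factor z)"
    using countable_factor unfolding inc_def by (rule countable_subset[rotated]) blast
  ultimately show ?thesis using CAleph0 unfolding cv_eq_def by simp
next
  case CAleph1
  then obtain n where "1 \<le> card (inc (greedy n) z)"
    using greedy_degree_unbounded[OF assms] by blast
  then have "inc (greedy n) z \<noteq> {}" by auto
  then show ?thesis using CAleph1 unfolding inc_factor by auto
qed

end

section \<open>Filtrations closed under finitary operations\<close>

lemma subset_chain_range_mono:
  assumes "mono (X :: nat \<Rightarrow> 'a set)"
  shows "subset.chain UNIV (range X)"
proof -
  have "X m \<subseteq> X n \<or> X n \<subseteq> X m" for m n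
    using assms nle_le[of m n] unfolding mono_def by blast
  then show ?thesis unfolding subset_chain_def by blast
qed

definition closure_step :: "('i \<Rightarrow> 'a set set \<Rightarrow> 'a \<Rightarrow> 'a) \<Rightarrow> 'i set \<Rightarrow> 'a set \<Rightarrow> 'a set" where
  "closure_step h I T = T \<union> (\<lambda>(i, R, x). h i R x) ` (I \<times> finite_edge_sets T \<times> T)"

definition finitary_closure :: "('i \<Rightarrow> 'a set set \<Rightarrow> 'a \<Rightarrow> 'a) \<Rightarrow> 'i set \<Rightarrow> 'a set \<Rightarrow> 'a set" where
  "finitary_closure h I B = (\<Union>n. (closure_step h I ^^ n) B)"

lemma mono_closure_step_iterates: "mono (\<lambda>n. (closure_step h I ^^ n) B)"
  unfolding mono_iff_le_Suc by (auto simp: closure_step_def)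

lemma subset_finitary_closure: "B \<subseteq> finitary_closure h I B"
proof -
  have "B = (closure_step h I ^^ 0) B" by simp
  then show ?thesis unfolding finitary_closure_def by blast
qed

lemma countable_finitary_closure:
  assumes "countable I" "countable B"
  shows "countable (finitary_closure h I B)"
proof -
  have "countable ((closure_step h I ^^ n) B)" for n
    by (induction n) (simp_all add: assms closure_step_def countable_finite_edge_sets)
  then show ?thesis unfolding finitary_closure_def by auto
qed

lemma finitary_closure_subset:
  assumes "\<And>i R x. x \<in> V \<Longrightarrow> h i R x \<in> V" "B \<subseteq> V"
  shows "finitary_closure h I B \<subseteq> V"
proof -
  have "(closure_step h I ^^ n) B \<subseteq> V" for n
    by (induction n) (auto simp: assms closure_step_def)
  then show ?thesis unfolding finitary_closure_def by auto
qed

lemma finitary_closure_closed: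
  assumes i: "i \<in> I" and R: "R \<in> finite_edge_sets (finitary_closure h I B)"
    and x: "x \<in> finitary_closure h I B"
  shows "h i R x \<in> finitary_closure h I B"
proof -
  let ?X = "\<lambda>n. (closure_step h I ^^ n) B"
  have "finite (insert x (\<Union>R))" "insert x (\<Union>R) \<subseteq> \<Union>(range ?X)"
    using R x unfolding finite_edge_sets_def finitary_closure_def by auto
  then obtain Y where "Y \<in> range ?X" "insert x (\<Union>R) \<subseteq> Y"
    using finite_subset_Union_chain subset_chain_range_mono[OF mono_closure_step_iterates[of h I B]]
    by (metis empty_not_UNIV image_is_empty)
  then obtain n where n: "insert x (\<Union>R) \<subseteq> ?X n" by blast
  then have "R \<in> finite_edge_sets (?X n)" using R unfolding finite_edge_sets_def by auto
  then have "(i, R, x) \<in> I \<times> finite_edge_sets (?X n) \<times> ?X n" using i n by blast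
  then have "h i R x \<in> ?X (Suc n)" unfolding closure_step_def funpow.simps o_apply
    by (rule UnI2[OF rev_image_eqI]) simp
  then show ?thesis unfolding finitary_closure_def by blast
qed

locale closing_filtration =
  fixes V :: "'a set" and h :: "'a set \<Rightarrow> 'a set set \<Rightarrow> 'a \<Rightarrow> 'a" and g :: "nat set \<Rightarrow> 'a"
  assumes enumeration: "bij_betw g (Field omega1) V"
    and h_closed: "\<And>X R x. x \<in> V \<Longrightarrow> h X R x \<in> V"
begin

definition successor_stage :: "(nat set \<Rightarrow> 'a set) \<Rightarrow> nat set \<Rightarrow> 'a set" where
  "successor_stage A a = finitary_closure h (A ` {c. (c, a) \<in> omega1}) (insert (g a) (A a))"

definition stage :: "nat set \<Rightarrow> 'a set" where
  "stage = wfrec {(a, b). olt a b} (\<lambda>A b. \<Union>a\<in>{a. olt a b}. successor_stage A a)"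

lemma stage_eq: "stage b = (\<Union>a\<in>{a. olt a b}. successor_stage stage a)"
proof -
  have "adm_wf {(a, b). olt a b} (\<lambda>A b. \<Union>a\<in>{a. olt a b}. successor_stage A a)"
    unfolding adm_wf_def
  proof (intro allI impI)
    fix A A' :: "nat set \<Rightarrow> 'a set" and b
    assume agree: "\<forall>a. (a, b) \<in> {(a, b). olt a b} \<longrightarrow> A a = A' a"
    have "successor_stage A a = successor_stage A' a" if "olt a b" for a
    proof -
      have "A c = A' c" if "(c, a) \<in> omega1" for c
        using agree le_olt_trans[OF that \<open>olt a b\<close>] by blast
      then have "A ` {c. (c, a) \<in> omega1} = A' ` {c. (c, a) \<in> omega1}" by auto
      moreover have "A a = A' a" using agree that by blast
      ultimately show ?thesis unfolding successor_stage_def by simp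
    qed
    then show "(\<Union>a\<in>{a. olt a b}. successor_stage A a) = (\<Union>a\<in>{a. olt a b}. successor_stage A' a)"
      by simp
  qed
  then show ?thesis unfolding stage_def by (subst wfrec_fixpoint[OF wf_olt]) simp_all
qed

lemma stage_subset_successor_stage: "insert (g a) (stage a) \<subseteq> successor_stage stage a"
  unfolding successor_stage_def by (rule subset_finitary_closure)

lemma successor_stage_subset: "olt a b \<Longrightarrow> successor_stage stage a \<subseteq> stage b"
  using stage_eq[of b] by blast

lemma stage_mono:
  assumes "(a, b) \<in> omega1"
  shows "stage a \<subseteq> stage b"
proof -
  have "stage a = (\<Union>c\<in>{c. olt c a}. successor_stage stage c)" by (rule stage_eq)
  also have "\<dots> \<subseteq> (\<Union>c\<in>{c. olt c b}. successor_stage stage c)"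
    using olt_le_trans[OF _ assms] by (intro UN_mono) auto
  also have "\<dots> = stage b" by (rule stage_eq[symmetric])
  finally show ?thesis .
qed

lemma successor_stage_mono:
  assumes "(a, b) \<in> omega1"
  shows "successor_stage stage a \<subseteq> successor_stage stage b"
proof (cases "a = b")
  case False
  then have "olt a b" using assms unfolding olt_def by blast
  then show ?thesis using successor_stage_subset stage_subset_successor_stage by blast
qed simp

lemma stage_empty: "(\<And>a. \<not> olt a b) \<Longrightarrow> stage b = {}"
  using stage_eq[of b] by simp

lemma countable_stage: "countable (stage b)"
proof (induction b rule: wf_induct_rule[OF wf_olt])
  case (1 b)
  have "countable (successor_stage stage a)" if "olt a b" for a
    unfolding successor_stage_def
    using 1 that countable_omega1_below by (intro countable_finitary_closure) simp_all
  then have "countable (\<Union>a\<in>{a. olt a b}. successor_stage stage a)"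
    by (intro countable_UN[OF countable_olt_below]) simp
  then show ?case using stage_eq[of b] by simp
qed

lemma stage_subset: "stage b \<subseteq> V"
proof (induction b rule: wf_induct_rule[OF wf_olt])
  case (1 b)
  have "successor_stage stage a \<subseteq> V" if "olt a b" for a
  proof -
    have "g a \<in> V" using that olt_Field enumeration unfolding bij_betw_def by blast
    then show ?thesis unfolding successor_stage_def
      using 1 that h_closed by (intro finitary_closure_subset) simp_all
  qed
  then show ?case using stage_eq[of b] by blast
qed

lemma stage_limit: "is_limit l \<Longrightarrow> stage l = (\<Union>b\<in>{b. olt b l}. stage b)"
proof
  assume l: "is_limit l"
  show "stage l \<subseteq> (\<Union>b\<in>{b. olt b l}. stage b)"
  proof
    fix x assume "x \<in> stage l"
    then obtain a where a: "olt a l" "x \<in> successor_stage stage a" using stage_eq[of l] by blast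
    then obtain b where "olt a b" "olt b l" using l unfolding is_limit_def by blast
    then show "x \<in> (\<Union>b\<in>{b. olt b l}. stage b)" using a successor_stage_subset by blast
  qed
  show "(\<Union>b\<in>{b. olt b l}. stage b) \<subseteq> stage l"
    by (intro UN_least stage_mono) (simp add: olt_imp_le)
qed

lemma stage_cover: "V = (\<Union>a\<in>Field omega1. stage a)"
proof
  show "V \<subseteq> (\<Union>a\<in>Field omega1. stage a)"
  proof
    fix x assume "x \<in> V"
    then obtain a where a: "a \<in> Field omega1" "x = g a"
      using enumeration unfolding bij_betw_def by blast
    then obtain b where b: "olt a b" using olt_unbounded by blast
    have "x \<in> successor_stage stage a" using a(2) stage_subset_successor_stage by blast
    then have "x \<in> stage b" using successor_stage_subset[OF b] by blast
    moreover have "b \<in> Field omega1" using olt_Field[OF b] by blast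
    ultimately show "x \<in> (\<Union>a\<in>Field omega1. stage a)" by blast
  qed
  show "(\<Union>a\<in>Field omega1. stage a) \<subseteq> V" by (intro UN_least stage_subset)
qed

lemma filtration_stage: "filtration V stage"
  unfolding filtration_def
  by (intro conjI allI impI ballI stage_mono stage_limit countable_stage stage_cover)

lemma stage_closed:
  assumes c: "olt c b" and R: "R \<in> finite_edge_sets (stage b)" and x: "x \<in> stage b"
  shows "h (stage c) R x \<in> stage b"
proof -
  let ?\<B> = "successor_stage stage ` {a. olt a b}"
  have "successor_stage stage a1 \<subseteq> successor_stage stage a2
      \<or> successor_stage stage a2 \<subseteq> successor_stage stage a1" if "olt a1 b" "olt a2 b" for a1 a2
    using olt_linear[of a1 a2] olt_Field[OF that(1)] olt_Field[OF that(2)]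
      successor_stage_mono olt_imp_le by blast
  then have chain: "subset.chain UNIV ?\<B>" unfolding subset_chain_def by blast
  have "finite (insert x (\<Union>R))" "insert x (\<Union>R) \<subseteq> \<Union>?\<B>"
    using R x stage_eq[of b] unfolding finite_edge_sets_def by auto
  then obtain a where a: "olt a b" "insert x (\<Union>R) \<subseteq> successor_stage stage a"
    using finite_subset_Union_chain[OF _ _ _ chain] c by blast
  obtain a' where a': "olt a' b" "(c, a') \<in> omega1" "insert x (\<Union>R) \<subseteq> successor_stage stage a'"
  proof (cases "olt a c")
    case True
    have "(c, c) \<in> omega1" using c olt_Field omega1_iff_olt by blast
    moreover have "successor_stage stage a \<subseteq> successor_stage stage c"
      using True by (intro successor_stage_mono olt_imp_le)
    ultimately show ?thesis using that[of c] c a(2) by blast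
  next
    case False
    then have "(c, a) \<in> omega1" using not_olt_iff olt_Field a(1) c by blast
    then show ?thesis using that[of a] a by blast
  qed
  then have "R \<in> finite_edge_sets (successor_stage stage a')"
    using R unfolding finite_edge_sets_def by auto
  moreover have "stage c \<in> stage ` {c. (c, a') \<in> omega1}" using a'(2) by blast
  ultimately have "h (stage c) R x \<in> successor_stage stage a'"
    using a'(3) unfolding successor_stage_def by (blast intro: finitary_closure_closed)
  then show ?thesis using successor_stage_subset[OF a'(1)] by blast
qed

end

lemma exists_closed_filtration:
  assumes "|V| =o omega1" and "\<And>X R x. x \<in> V \<Longrightarrow> h X R x \<in> V"
  obtains A where "filtration V A" and "\<And>b. (\<And>a. \<not> olt a b) \<Longrightarrow> A b = {}"
    and "\<And>b c R x. olt c b \<Longrightarrow> R \<in> finite_edge_sets (A b) \<Longrightarrow> x \<in> A b \<Longrightarrow> h (A c) R x \<in> A b"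
proof -
  have "|Field omega1| =o |V|"
    using card_of_Field_ordIso[OF Card_order_omega1] assms(1) ordIso_symmetric ordIso_transitive
    by blast
  then obtain g where "bij_betw g (Field omega1) V" using card_of_ordIso by blast
  then interpret closing_filtration V h g using assms(2) by unfold_locales
  show ?thesis using that filtration_stage stage_empty stage_closed by blast
qed

section \<open>Gluing countable factors along a club\<close>

lemma cv_ge_if_cv_eq: "cv_eq c A \<Longrightarrow> cv_ge c A"
  unfolding cv_eq_def cv_ge_def by (cases c) (auto simp: ordIso_iff_ordLeq)

lemma graph_edge_obtain:
  assumes "graph V E" "e \<in> E"
  obtains a b where "e = {a, b}" "a \<in> V" "b \<in> V"
proof -
  have "e \<subseteq> V" "card e = 2" using assms unfolding graph_def by auto
  then obtain a b where "e = {a, b}" by (auto simp: card_2_iff)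
  then show ?thesis using that \<open>e \<subseteq> V\<close> by blast
qed

lemma card_of_edges_ordLeq:
  assumes "graph V E" "infinite V"
  shows "|E| \<le>o |V|"
proof -
  have "E \<subseteq> (\<lambda>(a, b). {a, b}) ` (V \<times> V)"
  proof
    fix e assume "e \<in> E"
    then obtain a b where "e = {a, b}" "a \<in> V" "b \<in> V" using graph_edge_obtain[OF assms(1)] by blast
    then show "e \<in> (\<lambda>(a, b). {a, b}) ` (V \<times> V)" by force
  qed
  then have "|E| \<le>o |V \<times> V|"
    using ordLeq_transitive[OF card_of_mono1 card_of_image] by blast
  then show ?thesis using ordLeq_ordIso_trans[OF _ card_of_Times_same_infinite[OF assms(2)]] by blast
qed

lemma ordIso_omega1_if_uncountable_edges:
  assumes "graph V E" "|V| =o omega1" "F \<subseteq> E" "uncountable F"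
  shows "|F| =o omega1"
proof -
  have "|F| \<le>o |E|" using assms(3) by (rule card_of_mono1)
  moreover have "|E| \<le>o |V|"
    using card_of_edges_ordLeq[OF assms(1)] uncountable_if_ordIso_omega1[OF assms(2)]
    countable_finite by blast
  ultimately have "|F| \<le>o omega1" using assms(2) ordLeq_transitive ordLeq_ordIso_trans by blast
  then show ?thesis using assms(4) uncountable_iff_omega1_ordLeq ordIso_iff_ordLeq by blast
qed

text \<open>The graph \<open>G\<^sub>\<alpha>\<close> and the function \<open>f\<^sub>\<alpha>\<close> of a destruction, as functions of the removed
  set \<open>B = A\<^sub>\<alpha>\<close>.\<close>

definition tail_vertices :: "'a set \<Rightarrow> ('a \<Rightarrow> cval) \<Rightarrow> 'a set \<Rightarrow> 'a set" where
  "tail_vertices V f B = (V - B) \<union> {x \<in> V. f x = CAleph1}"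

definition tail_edges :: "'a set \<Rightarrow> 'a set set \<Rightarrow> ('a \<Rightarrow> cval) \<Rightarrow> 'a set \<Rightarrow> 'a set set" where
  "tail_edges V E f B = {e \<in> E. \<exists>x y. e = {x, y} \<and> x \<in> tail_vertices V f B \<and> y \<in> V - B}"

definition tail_demand :: "'a set \<Rightarrow> ('a \<Rightarrow> cval) \<Rightarrow> 'a set \<Rightarrow> 'a \<Rightarrow> cval" where
  "tail_demand V f B = (\<lambda>x. if x \<in> tail_vertices V f B then f x else CFin 0)"

definition tail_partner :: "('a set \<Rightarrow> 'a set set \<Rightarrow> ('a \<Rightarrow> cval) \<Rightarrow> bool)
    \<Rightarrow> 'a set \<Rightarrow> 'a set set \<Rightarrow> ('a \<Rightarrow> cval) \<Rightarrow> 'a set \<Rightarrow> 'a set set \<Rightarrow> 'a \<Rightarrow> 'a" where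
  "tail_partner P V E f B = partner P (tail_vertices V f B) (tail_edges V E f B) (tail_demand V f B)"

lemma destruction_stage_eq:
  "V_al V f A a = tail_vertices V f (A a)"
  "E_al V E f A a = tail_edges V E f (A a)"
  "f_al V f A a = tail_demand V f (A a)"
  unfolding V_al_def tail_vertices_def E_al_def tail_edges_def f_al_def tail_demand_def by simp_all

lemma tail_empty:
  assumes "inC V E f"
  shows "tail_vertices V f {} = V" "tail_edges V E f {} = E" "tail_demand V f {} = f"
proof -
  show V: "tail_vertices V f {} = V" unfolding tail_vertices_def by blast
  have "\<exists>x y. e = {x, y} \<and> x \<in> V \<and> y \<in> V" if "e \<in> E" for e
    using assms that unfolding inC_def by (metis graph_edge_obtain)
  then show "tail_edges V E f {} = E" unfolding tail_edges_def V by blast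
  show "tail_demand V f {} = f" using assms unfolding tail_demand_def V inC_def by auto
qed

lemma tail_vertices_subset: "tail_vertices V f B \<subseteq> V"
  unfolding tail_vertices_def by blast

lemma tail_partner_mem:
  assumes "x \<in> V"
  shows "tail_partner P V E f B R x \<in> V"
proof -
  have "tail_partner P V E f B R x \<in> insert x (tail_vertices V f B)"
    unfolding tail_partner_def by (rule partner_mem)
  then show ?thesis using assms tail_vertices_subset[of V f B] by auto
qed

lemma tail_edges_subset: "tail_edges V E f B \<subseteq> E"
  unfolding tail_edges_def by blast

lemma tail_edge_not_subset: "e \<in> tail_edges V E f B \<Longrightarrow> \<not> e \<subseteq> B"
  unfolding tail_edges_def by auto

lemma tail_edge_avoids: "e \<in> tail_edges V E f B \<Longrightarrow> x \<in> B \<Longrightarrow> f x \<noteq> CAleph1 \<Longrightarrow> x \<notin> e"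
  unfolding tail_edges_def tail_vertices_def by auto

locale club_gluing =
  fixes V :: "'a set" and E :: "'a set set" and f :: "'a \<Rightarrow> cval"
    and P :: "'a set \<Rightarrow> 'a set set \<Rightarrow> ('a \<Rightarrow> cval) \<Rightarrow> bool"
    and A :: "nat set \<Rightarrow> 'a set" and C :: "nat set set"
  assumes inC: "inC V E f" and card_V: "|V| =o omega1" and hereditary: "hereditary P"
    and holds: "holds P V E f"
    and filtration: "filtration V A"
    and A_zero: "A omega1_zero = {}"
    and A_closed: "\<And>b c R x. olt c b \<Longrightarrow> R \<in> finite_edge_sets (A b) \<Longrightarrow> x \<in> A b \<Longrightarrow>
      tail_partner P V E f (A c) R x \<in> A b"
    and club: "club C"
    and holds_club: "\<And>c. c \<in> C \<Longrightarrow>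
      holds P (tail_vertices V f (A c)) (tail_edges V E f (A c)) (tail_demand V f (A c))"
begin

abbreviation stages :: "nat set set" where
  "stages \<equiv> insert omega1_zero C"

lemma graph: "graph V E"
  using inC unfolding inC_def by blast

lemma club_Field: "C \<subseteq> Field omega1"
  using club unfolding club_def by blast

lemma stages_Field: "stages \<subseteq> Field omega1"
  using club_Field omega1_zero(1) by blast

lemma holds_stage: "\<alpha> \<in> stages \<Longrightarrow>
    holds P (tail_vertices V f (A \<alpha>)) (tail_edges V E f (A \<alpha>)) (tail_demand V f (A \<alpha>))"
  using holds_club holds tail_empty[OF inC] A_zero by auto

definition next_club :: "nat set \<Rightarrow> nat set" where
  "next_club \<alpha> = (SOME \<beta>. \<beta> \<in> C \<and> olt \<alpha> \<beta> \<and> (\<forall>c\<in>C. olt \<alpha> c \<longrightarrow> (\<beta>, c) \<in> omega1))"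

lemma next_club:
  assumes "\<alpha> \<in> Field omega1"
  shows "next_club \<alpha> \<in> C" "olt \<alpha> (next_club \<alpha>)"
    and "\<And>c. c \<in> C \<Longrightarrow> olt \<alpha> c \<Longrightarrow> (next_club \<alpha>, c) \<in> omega1"
proof -
  obtain c where "c \<in> {c \<in> C. olt \<alpha> c}" using club assms unfolding club_def by blast
  then obtain \<beta> where \<beta>: "\<beta> \<in> {c \<in> C. olt \<alpha> c}" "\<And>c. olt c \<beta> \<Longrightarrow> c \<notin> {c \<in> C. olt \<alpha> c}"
    by (rule olt_minimal) blast
  have "(\<beta>, c) \<in> omega1" if "c \<in> C" "olt \<alpha> c" for c
    using \<beta> that not_olt_iff olt_Field by blast
  then have "\<exists>\<beta>. \<beta> \<in> C \<and> olt \<alpha> \<beta> \<and> (\<forall>c\<in>C. olt \<alpha> c \<longrightarrow> (\<beta>, c) \<in> omega1)" using \<beta>(1) by blast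
  then have "next_club \<alpha> \<in> C \<and> olt \<alpha> (next_club \<alpha>) \<and>
      (\<forall>c\<in>C. olt \<alpha> c \<longrightarrow> (next_club \<alpha>, c) \<in> omega1)"
    unfolding next_club_def by (rule someI_ex)
  then show "next_club \<alpha> \<in> C" "olt \<alpha> (next_club \<alpha>)"
    and "\<And>c. c \<in> C \<Longrightarrow> olt \<alpha> c \<Longrightarrow> (next_club \<alpha>, c) \<in> omega1" by blast+
qed

lemma next_club_le_stage:
  assumes "\<alpha> \<in> stages" "\<alpha>' \<in> stages" "olt \<alpha> \<alpha>'"
  shows "(next_club \<alpha>, \<alpha>') \<in> omega1"
proof -
  have "\<alpha>' \<in> C" using assms(2,3) omega1_zero(2) by blast
  moreover have "\<alpha> \<in> Field omega1" using assms(1) stages_Field by blast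
  ultimately show ?thesis using next_club(3) assms(3) by blast
qed

lemma greedy_factor_stage:
  assumes "\<alpha> \<in> stages"
  shows "greedy_factor P (tail_vertices V f (A \<alpha>)) (tail_edges V E f (A \<alpha>)) (tail_demand V f (A \<alpha>))
    (A (next_club \<alpha>))"
proof
  have \<alpha>_Field: "\<alpha> \<in> Field omega1" using assms stages_Field by blast
  then have "next_club \<alpha> \<in> Field omega1" using next_club(1) club_Field by blast
  then show "countable (A (next_club \<alpha>))" using filtration unfolding filtration_def by blast
  show "partner P (tail_vertices V f (A \<alpha>)) (tail_edges V E f (A \<alpha>)) (tail_demand V f (A \<alpha>)) R x
      \<in> A (next_club \<alpha>)" if "R \<in> finite_edge_sets (A (next_club \<alpha>))" "x \<in> A (next_club \<alpha>)" for R x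
    using A_closed[OF next_club(2)[OF \<alpha>_Field] that] unfolding tail_partner_def .
qed (use hereditary holds_stage[OF assms] in simp_all)

definition piece :: "nat set \<Rightarrow> 'a set set" where
  "piece \<alpha> = greedy_factor.factor P (tail_vertices V f (A \<alpha>)) (tail_edges V E f (A \<alpha>))
    (tail_demand V f (A \<alpha>)) (A (next_club \<alpha>))"

definition glued_factor :: "'a set set" where
  "glued_factor = (\<Union>\<alpha>\<in>stages. piece \<alpha>)"

lemma piece_subset: "\<alpha> \<in> stages \<Longrightarrow> piece \<alpha> \<subseteq> tail_edges V E f (A \<alpha>)"
  unfolding piece_def using greedy_factor.factor_subset[OF greedy_factor_stage] .

lemma piece_edges_subset: "\<alpha> \<in> stages \<Longrightarrow> e \<in> piece \<alpha> \<Longrightarrow> e \<subseteq> A (next_club \<alpha>)"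
  unfolding piece_def using greedy_factor.factor_edges_subset[OF greedy_factor_stage] .

lemma glued_factor_subset: "glued_factor \<subseteq> E"
  unfolding glued_factor_def using piece_subset tail_edges_subset by (meson UN_least subset_trans)

lemma piece_not_in_later:
  assumes "\<alpha> \<in> stages" "\<alpha>' \<in> stages" "olt \<alpha> \<alpha>'" "e \<in> piece \<alpha>"
  shows "e \<notin> piece \<alpha>'"
proof
  assume "e \<in> piece \<alpha>'"
  moreover have "e \<subseteq> A \<alpha>'"
    using piece_edges_subset[OF assms(1,4)] filtration_mono[OF filtration next_club_le_stage[OF assms(1-3)]]
    by blast
  ultimately show False using piece_subset[OF assms(2)] tail_edge_not_subset by blast
qed

lemma pieces_disjoint:
  assumes "\<alpha> \<in> stages" "\<alpha>' \<in> stages" "e \<in> piece \<alpha>" "e \<in> piece \<alpha>'"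
  shows "\<alpha> = \<alpha>'"
proof -
  have "olt \<alpha> \<alpha>' \<or> \<alpha> = \<alpha>' \<or> olt \<alpha>' \<alpha>"
    using olt_linear stages_Field assms(1,2) by blast
  then show ?thesis using piece_not_in_later assms by blast
qed

lemma inc_glued_factor:
  assumes \<alpha>: "\<alpha> \<in> stages" and x: "x \<notin> A \<alpha>" "x \<in> A (next_club \<alpha>)"
    and fx: "f x \<noteq> CAleph1"
  shows "inc glued_factor x = inc (piece \<alpha>) x"
proof
  show "inc glued_factor x \<subseteq> inc (piece \<alpha>) x"
  proof
    fix e assume "e \<in> inc glued_factor x"
    then obtain \<alpha>' where \<alpha>': "\<alpha>' \<in> stages" "e \<in> piece \<alpha>'" and "x \<in> e"
      by (auto simp: glued_factor_def inc_def)
    have "\<not> olt \<alpha>' \<alpha>"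
    proof
      assume "olt \<alpha>' \<alpha>"
      then have "A (next_club \<alpha>') \<subseteq> A \<alpha>"
        using filtration_mono[OF filtration next_club_le_stage[OF \<alpha>'(1) \<alpha>]] by blast
      then have "e \<subseteq> A \<alpha>" using piece_edges_subset[OF \<alpha>'] by blast
      then show False using x(1) \<open>x \<in> e\<close> by blast
    qed
    moreover have "\<not> olt \<alpha> \<alpha>'"
    proof
      assume "olt \<alpha> \<alpha>'"
      then have "A (next_club \<alpha>) \<subseteq> A \<alpha>'"
        using filtration_mono[OF filtration next_club_le_stage[OF \<alpha> \<alpha>'(1)]] by blast
      then have "x \<in> A \<alpha>'" using x(2) by blast
      moreover have "e \<in> tail_edges V E f (A \<alpha>')" using piece_subset \<alpha>' by blast
      ultimately have "x \<notin> e" using tail_edge_avoids fx by metis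
      then show False using \<open>x \<in> e\<close> by contradiction
    qed
    moreover have "olt \<alpha>' \<alpha> \<or> \<alpha>' = \<alpha> \<or> olt \<alpha> \<alpha>'"
      using olt_linear[of \<alpha>' \<alpha>] stages_Field \<alpha> \<alpha>'(1) by blast
    ultimately have "\<alpha>' = \<alpha>" by blast
    then show "e \<in> inc (piece \<alpha>) x" using \<alpha>' \<open>x \<in> e\<close> unfolding inc_def by blast
  qed
  show "inc (piece \<alpha>) x \<subseteq> inc glued_factor x"
    using \<alpha> unfolding glued_factor_def inc_def by blast
qed

lemma degree_finite_or_countable:
  assumes x: "x \<in> V" and fx: "f x \<noteq> CAleph1"
  shows "cv_eq (f x) (inc glued_factor x)"
proof -
  have "x \<in> (\<Union>a\<in>Field omega1. A a)" using x filtration unfolding filtration_def by blast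
  then obtain b where "b \<in> Field omega1" "x \<in> A b" by blast
  moreover have "x \<notin> A omega1_zero" using A_zero by blast
  ultimately obtain \<alpha> where \<alpha>: "\<alpha> \<in> stages" "x \<notin> A \<alpha>" and later: "\<And>c. c \<in> C \<Longrightarrow> olt \<alpha> c \<Longrightarrow> x \<in> A c"
    using last_club_stage_excluding[OF filtration club omega1_zero(1)] by blast
  have "\<alpha> \<in> Field omega1" using \<alpha>(1) stages_Field by blast
  then have x_next: "x \<in> A (next_club \<alpha>)" using next_club(1,2) later by blast
  have x_tail: "x \<in> A (next_club \<alpha>) \<inter> tail_vertices V f (A \<alpha>)"
    using x x_next \<alpha>(2) unfolding tail_vertices_def by blast
  then have "tail_demand V f (A \<alpha>) x = f x" unfolding tail_demand_def by simp
  then have "cv_eq (f x) (inc (piece \<alpha>) x)"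
    using greedy_factor.factor_degree[OF greedy_factor_stage[OF \<alpha>(1)] x_tail] fx
    unfolding piece_def by simp
  then show ?thesis using inc_glued_factor[OF \<alpha> x_next fx] by simp
qed

lemma degree_aleph1:
  assumes x: "x \<in> V" and fx: "f x = CAleph1"
  shows "|inc glued_factor x| =o omega1"
proof -
  have "x \<in> (\<Union>a\<in>Field omega1. A a)" using x filtration unfolding filtration_def by blast
  then obtain b where b: "b \<in> Field omega1" "x \<in> A b" by blast
  define I where "I = {c \<in> C. olt b c}"
  have "\<exists>e\<in>piece \<alpha>. x \<in> e" if "\<alpha> \<in> I" for \<alpha>
  proof -
    have \<alpha>: "\<alpha> \<in> stages" "\<alpha> \<in> Field omega1" using that club_Field unfolding I_def by blast+
    have "x \<in> A (next_club \<alpha>)"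
      using b(2) that filtration_mono_olt[OF filtration] olt_trans[OF _ next_club(2)[OF \<alpha>(2)]]
      unfolding I_def by blast
    then have x_tail: "x \<in> A (next_club \<alpha>) \<inter> tail_vertices V f (A \<alpha>)"
      using x fx unfolding tail_vertices_def by blast
    then have "tail_demand V f (A \<alpha>) x = CAleph1" using fx unfolding tail_demand_def by simp
    then show ?thesis
      using greedy_factor.factor_degree[OF greedy_factor_stage[OF \<alpha>(1)] x_tail]
      unfolding piece_def inc_def by auto
  qed
  then obtain edge where edge: "\<And>\<alpha>. \<alpha> \<in> I \<Longrightarrow> edge \<alpha> \<in> piece \<alpha> \<and> x \<in> edge \<alpha>" by metis
  have "I \<subseteq> stages" unfolding I_def by blast
  have "inj_on edge I"
  proof (rule inj_onI)
    fix \<alpha> \<alpha>' assume "\<alpha> \<in> I" "\<alpha>' \<in> I" "edge \<alpha> = edge \<alpha>'"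
    moreover have "edge \<alpha> \<in> piece \<alpha>" "edge \<alpha>' \<in> piece \<alpha>'" using edge \<open>\<alpha> \<in> I\<close> \<open>\<alpha>' \<in> I\<close> by blast+
    moreover have "\<alpha> \<in> stages" "\<alpha>' \<in> stages" using \<open>I \<subseteq> stages\<close> \<open>\<alpha> \<in> I\<close> \<open>\<alpha>' \<in> I\<close> by blast+
    ultimately show "\<alpha> = \<alpha>'" using pieces_disjoint by metis
  qed
  moreover have "uncountable I" unfolding I_def using uncountable_club_above[OF club b(1)] .
  ultimately have "uncountable (edge ` I)" using countable_image_inj_on by blast
  moreover have "edge ` I \<subseteq> inc glued_factor x"
    using edge \<open>I \<subseteq> stages\<close> unfolding glued_factor_def inc_def by blast
  ultimately have "uncountable (inc glued_factor x)" using countable_subset by blast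
  moreover have "inc glued_factor x \<subseteq> E" using glued_factor_subset unfolding inc_def by blast
  ultimately show ?thesis by (intro ordIso_omega1_if_uncountable_edges[OF graph card_V])
qed

lemma perfect_glued_factor: "perfect_f_factor V E f glued_factor"
proof -
  have "cv_eq (f x) (inc glued_factor x)" if "x \<in> V" for x
    using degree_finite_or_countable[OF that] degree_aleph1[OF that]
    unfolding cv_eq_def by (cases "f x = CAleph1") auto
  then show ?thesis
    unfolding perfect_f_factor_def f_factor_def using glued_factor_subset cv_ge_if_cv_eq by blast
qed

end

theorem theorem2:
  fixes V :: "'a set" and E :: "'a set set" and f :: "'a \<Rightarrow> cval"
    and P :: "'a set \<Rightarrow> 'a set set \<Rightarrow> ('a \<Rightarrow> cval) \<Rightarrow> bool"
  assumes "inC V E f"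
    and "(card_of V, omega1) \<in> ordIso"
    and "hereditary P"
    and "holds P V E f"
    and "\<not> destructed P V E f"
  shows "\<exists>F. perfect_f_factor V E f F"
proof -
  obtain A where A: "filtration V A" "\<And>b. (\<And>a. \<not> olt a b) \<Longrightarrow> A b = {}"
    and closed: "\<And>b c R x. olt c b \<Longrightarrow> R \<in> finite_edge_sets (A b) \<Longrightarrow> x \<in> A b \<Longrightarrow>
      tail_partner P V E f (A c) R x \<in> A b"
    using exists_closed_filtration[where h = "tail_partner P V E f", OF assms(2) tail_partner_mem]
    by blast
  have "\<not> destruction P V E f A" using assms(5) unfolding destructed_def by blast
  then have "\<not> stationary {a \<in> Field omega1. \<not> holds P (V_al V f A a) (E_al V E f A a) (f_al V f A a)}"
    using A(1) unfolding destruction_def by blast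
  then obtain C where C: "club C"
    and disjoint: "{a \<in> Field omega1. \<not> holds P (V_al V f A a) (E_al V E f A a) (f_al V f A a)} \<inter> C = {}"
    by (auto simp: stationary_def)
  have "holds P (tail_vertices V f (A c)) (tail_edges V E f (A c)) (tail_demand V f (A c))"
    if "c \<in> C" for c
    using that C disjoint unfolding club_def destruction_stage_eq by blast
  then interpret club_gluing V E f P A C
    using assms(1-4) A closed omega1_zero(2) C by unfold_locales blast+
  show ?thesis using perfect_glued_factor by blast
qed

end
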